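(* For any $m,n\in\mathbb N$ there exists a constant $c>0$ such that $|\mathbb P^T_m(x)-\mathbb P^T_n(x)|\le c$ for all real $x\ge1$. Consequently $\mathbb P^T_m(x)\sim\mathbb P^T_n(x)$ as $x\to+\infty$ for arbitrary $m,n\in\mathbb N$.
   Context: Let $p_n$ denote the $n$-th prime number. Define $p^{(0)}_n=n$ and recursively $p^{(k+1)}_n=p_{p^{(k)}_n}$ for $k\in\mathbb N_0$. Let $\mathbb P^T_n=\{p^{(k)}_n:k\in\mathbb N\}$ and, for $A\subset\mathbb N$ and $x\ge1$, $A(x)=\#\{a\le x: a\in A\}$. $f\sim g$ means $f/g\to1$. *)

theory Defs
  imports Complex_Main "HOL-Computational_Algebra.Primes" "HOL-Library.Landau_Symbols"
    "HOL-Library.Infinite_Set"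
begin

text \<open>The n-th prime p_n, 1-indexed (p_1 = 2, p_2 = 3, ...).
  The value at 0 is irrelevant (never used).\<close>
definition nth_prime :: "nat \<Rightarrow> nat" where
  "nth_prime n = enumerate {p. prime p} (n - 1)"

definition iter_prime :: "nat \<Rightarrow> nat \<Rightarrow> nat" where
  "iter_prime k n = (nth_prime ^^ k) n"

definition PT :: "nat \<Rightarrow> nat set" where
  "PT n = {iter_prime k n | k. k \<ge> 1}"

definition count_le :: "nat set \<Rightarrow> real \<Rightarrow> nat" where
  "count_le A x = card {a \<in> A. real a \<le> x}"

end

theory Submission
  imports Defs
begin

text \<open>
  The iterated primes starting from \<open>n\<close> form the orbit of \<open>n\<close> under \<open>f k = p\<^sub>k\<close>, a
  monotone map with \<open>k < f k\<close>. For any such map and \<open>a \<le> b\<close> we have \<open>b \<le> f\<^sup>b(a)\<close>, so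
  monotonicity gives \<open>f\<^sup>k(a) \<le> f\<^sup>k(b) \<le> f\<^sup>k\<^sup>+\<^sup>b(a)\<close>: the two orbits interleave up to a
  shift of \<open>b\<close> steps, and their counting functions differ by at most \<open>b\<close>. Since the
  counting functions tend to infinity, a bounded difference makes them asymptotically equal.
\<close>

definition orbit_count :: "(nat \<Rightarrow> nat) \<Rightarrow> nat \<Rightarrow> real \<Rightarrow> nat" where
  "orbit_count f a x = card {k. 1 \<le> k \<and> real ((f ^^ k) a) \<le> x}"

lemma funpow_ge_add:
  assumes "\<And>k. k < f k"
  shows "k + a \<le> (f ^^ k) a"
  by (induction k) (auto simp: Suc_le_eq intro: le_less_trans assms)

lemma strict_mono_orbit:
  assumes "\<And>k. k < f k"
  shows "strict_mono (\<lambda>k. (f ^^ k) a)"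
  unfolding strict_mono_Suc_iff by (simp add: assms)

lemma finite_orbit_indices:
  assumes "\<And>k. k < f k"
  shows "finite {k. 1 \<le> k \<and> real ((f ^^ k) a) \<le> x}"
proof (rule finite_subset)
  show "{k. 1 \<le> k \<and> real ((f ^^ k) a) \<le> x} \<subseteq> {..nat \<lceil>x\<rceil>}"
  proof
    fix k assume "k \<in> {k. 1 \<le> k \<and> real ((f ^^ k) a) \<le> x}"
    moreover have "real k \<le> real ((f ^^ k) a)"
      using funpow_ge_add[OF assms, of k a] by simp
    ultimately show "k \<in> {..nat \<lceil>x\<rceil>}"
      by (simp add: le_nat_iff le_ceiling_iff)
  qed
qed simp

lemma count_le_orbit:
  assumes "\<And>k. k < f k"
  shows "count_le {(f ^^ k) a | k. 1 \<le> k} x = orbit_count f a x"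
proof -
  have "{b \<in> {(f ^^ k) a | k. 1 \<le> k}. real b \<le> x} =
      (\<lambda>k. (f ^^ k) a) ` {k. 1 \<le> k \<and> real ((f ^^ k) a) \<le> x}"
    by auto
  moreover have "inj (\<lambda>k. (f ^^ k) a)"
    using strict_mono_orbit[OF assms] by (rule strict_mono_imp_inj_on)
  ultimately show ?thesis
    unfolding count_le_def orbit_count_def by (simp add: card_image inj_on_subset)
qed

lemma orbit_count_antimono:
  assumes "mono f" "\<And>k. k < f k" "a \<le> b"
  shows "orbit_count f b x \<le> orbit_count f a x"
  unfolding orbit_count_def
proof (rule card_mono)
  show "{k. 1 \<le> k \<and> real ((f ^^ k) b) \<le> x} \<subseteq> {k. 1 \<le> k \<and> real ((f ^^ k) a) \<le> x}"
    using funpow_mono[OF assms(1,3)] by (auto intro: order_trans[OF of_nat_mono])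
qed (rule finite_orbit_indices[OF assms(2)])

lemma orbit_count_le_shift:
  assumes "mono f" "\<And>k. k < f k" "b \<le> (f ^^ j) a"
  shows "orbit_count f a x \<le> orbit_count f b x + j"
proof -
  let ?I = "\<lambda>c. {k. 1 \<le> k \<and> real ((f ^^ k) c) \<le> x}"
  have "?I a \<subseteq> {1..j} \<union> (\<lambda>i. i + j) ` ?I b"
  proof
    fix k assume k: "k \<in> ?I a"
    show "k \<in> {1..j} \<union> (\<lambda>i. i + j) ` ?I b"
    proof (cases "k \<le> j")
      case False
      define i where "i = k - j"
      with False have i: "k = i + j" "1 \<le> i"
        by simp_all
      have "(f ^^ i) b \<le> (f ^^ k) a"
        using funpow_mono[OF assms(1,3), of i] by (simp add: i(1) funpow_add)
      with k i have "i \<in> ?I b"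
        by (auto intro: order_trans[OF of_nat_mono])
      with i(1) show ?thesis
        by blast
    qed (use k in auto)
  qed
  then have "orbit_count f a x \<le> card ({1..j} \<union> (\<lambda>i. i + j) ` ?I b)"
    unfolding orbit_count_def using finite_orbit_indices[OF assms(2)] by (intro card_mono) simp_all
  also have "\<dots> \<le> card {1..j} + card ((\<lambda>i. i + j) ` ?I b)"
    by (rule card_Un_le)
  also have "\<dots> \<le> j + card (?I b)"
    using card_image_le[OF finite_orbit_indices[OF assms(2)]] by simp
  finally show ?thesis
    by (simp add: orbit_count_def)
qed

lemma orbit_count_diff_bounded:
  assumes "mono f" "\<And>k. k < f k"
  shows "\<bar>real (orbit_count f a x) - real (orbit_count f b x)\<bar> \<le> real (max a b)"
proof -
  have "\<bar>real (orbit_count f a x) - real (orbit_count f b x)\<bar> \<le> real b"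
    if "a \<le> b" for a b
  proof -
    have "real (orbit_count f b x) \<le> real (orbit_count f a x)"
      using orbit_count_antimono[OF assms that] by simp
    moreover have "b \<le> (f ^^ b) a"
      using funpow_ge_add[OF assms(2), of b a] by simp
    then have "real (orbit_count f a x) \<le> real (orbit_count f b x) + real b"
      using orbit_count_le_shift[OF assms] by (metis of_nat_add of_nat_mono)
    ultimately show ?thesis
      by linarith
  qed
  from this[of a b] this[of b a] show ?thesis
    by (cases "a \<le> b") (simp_all add: abs_minus_commute)
qed

lemma orbit_count_tendsto_at_top:
  assumes "\<And>k. k < f k"
  shows "filterlim (\<lambda>x. real (orbit_count f a x)) at_top at_top"
  unfolding filterlim_at_top
proof
  fix Z :: real
  let ?N = "nat \<lceil>Z\<rceil>"
  show "\<forall>\<^sub>F x in at_top. Z \<le> real (orbit_count f a x)"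
  proof (rule eventually_at_top_linorderI)
    fix x assume x: "real ((f ^^ ?N) a) \<le> x"
    have "{1..?N} \<subseteq> {k. 1 \<le> k \<and> real ((f ^^ k) a) \<le> x}"
    proof safe
      fix k assume "k \<in> {1..?N}"
      then have "(f ^^ k) a \<le> (f ^^ ?N) a"
        using strict_mono_less_eq[OF strict_mono_orbit[OF assms]] by simp
      with x show "real ((f ^^ k) a) \<le> x"
        by linarith
    qed simp
    then have "card {1..?N} \<le> orbit_count f a x"
      unfolding orbit_count_def by (rule card_mono[OF finite_orbit_indices[OF assms]])
    then have "?N \<le> orbit_count f a x"
      by simp
    then show "Z \<le> real (orbit_count f a x)"
      by linarith
  qed
qed

lemma asymp_equiv_bounded_diff:
  fixes f g :: "'a \<Rightarrow> real"
  assumes "filterlim g at_top F" "\<And>x. \<bar>f x - g x\<bar> \<le> c"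
  shows "f \<sim>[F] g"
proof -
  have "(\<lambda>x. f x - g x) \<in> O[F](\<lambda>_. 1)"
    using assms(2) by (intro bigoI[of _ c]) simp
  moreover have "(\<lambda>_. 1) \<in> o[F](g)"
  proof (rule smalloI_tendsto)
    show "((\<lambda>x. 1 / g x) \<longlongrightarrow> 0) F"
      using tendsto_inverse_0_at_top[OF assms(1)] by (simp add: inverse_eq_divide)
    have "\<forall>\<^sub>F x in F. 0 < g x"
      using assms(1) filterlim_at_top_dense by blast
    then show "\<forall>\<^sub>F x in F. g x \<noteq> 0"
      by (rule eventually_mono) simp
  qed
  ultimately show ?thesis
    unfolding asymp_equiv_altdef by (rule landau_o.big_small_trans)
qed

lemma mono_nth_prime: "mono nth_prime"
  unfolding nth_prime_def by (intro monoI) (simp add: primes_infinite)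

lemma enumerate_primes_ge: "i + 2 \<le> enumerate {p::nat. prime p} i"
proof (induction i)
  case 0
  have "prime (enumerate {p::nat. prime p} 0)"
    using enumerate_in_set[OF primes_infinite[unfolded Collect_mem_eq]] by blast
  then have "2 \<le> enumerate {p::nat. prime p} 0"
    by (rule prime_ge_2_nat)
  then show ?case
    by simp
next
  case (Suc i)
  have "enumerate {p::nat. prime p} i < enumerate {p::nat. prime p} (Suc i)"
    by (rule enumerate_mono) (use primes_infinite in simp_all)
  with Suc show ?case
    by simp
qed

lemma less_nth_prime: "k < nth_prime k"
  unfolding nth_prime_def using enumerate_primes_ge[of "k - 1"] by simp

lemma count_le_PT: "count_le (PT n) x = orbit_count nth_prime n x"
  unfolding PT_def iter_prime_def by (rule count_le_orbit[OF less_nth_prime])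

theorem theorem6:
  fixes m n :: nat
  assumes "m \<ge> 1" and "n \<ge> 1"
  shows "(\<exists>c>0. \<forall>x::real. x \<ge> 1 \<longrightarrow>
            \<bar>real (count_le (PT m) x) - real (count_le (PT n) x)\<bar> \<le> c)
       \<and> (\<lambda>x. real (count_le (PT m) x)) \<sim>[at_top] (\<lambda>x. real (count_le (PT n) x))"
proof
  have bounded: "\<bar>real (count_le (PT m) x) - real (count_le (PT n) x)\<bar> \<le> real (max m n)"
    for x
    unfolding count_le_PT by (rule orbit_count_diff_bounded[OF mono_nth_prime less_nth_prime])
  show "\<exists>c>0. \<forall>x::real. x \<ge> 1 \<longrightarrow>
            \<bar>real (count_le (PT m) x) - real (count_le (PT n) x)\<bar> \<le> c"
    using bounded assms by (intro exI[of _ "real (max m n)"]) auto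
  show "(\<lambda>x. real (count_le (PT m) x)) \<sim>[at_top] (\<lambda>x. real (count_le (PT n) x))"
    using bounded unfolding count_le_PT
    by (intro asymp_equiv_bounded_diff[OF orbit_count_tendsto_at_top[OF less_nth_prime]])
qed

end
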